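(* Let $\tilde\Phi_N=[\tilde A\ \tilde B]$ be the regularized least-squares estimate and $\hat\Phi_N=[\hat A\ \hat B]$ the sparsified estimate described in the context, and let $\tilde\Delta_N=\Phi-\tilde\Phi_N$, $\Delta_N=\Phi-\hat\Phi_N$ with $\Phi=[A\ B]$. If $\|\tilde\Delta_N\|\le\varepsilon$ for some $\varepsilon>0$, then $\|\Delta_N\|\le\sqrt{\psi}\,\varepsilon$, where $\psi$ is the number of strongly connected components of the directed graph $\mathcal{G}(\mathcal{V},\mathcal{A})$.
   Context: Let $\mathcal{V}=[p]$ with block dimensions $n_i,m_i$, $n=\sum n_i$, $m=\sum m_i$. $A\in\mathbb{R}^{n\times n}$, $B\in\mathbb{R}^{n\times m}$ have blocks $A_{ij}\in\mathbb{R}^{n_i\times n_j}$, $B_{ij}\in\mathbb{R}^{n_i\times m_j}$ with $A_{ij}=0$, $B_{ij}=0$ whenever $j\notin\mathcal{N}_i$ for given sets $\mathcal{N}_i\subseteq\mathcal{V}$. $\mathcal{G}(\mathcal{V},\mathcal{A})$ is a directed graph without self loops whose edges carry delays $0$ or $1$; $D_{ij}$ is the minimum total delay over directed paths from $j$ to $i$ ($D_{ii}=0$, $D_{ij}=+\infty$ if there is no such path). It is assumed that $D_{ij}\le1$ for all $j\in\mathcal{N}_i$. Given a trajectory $x_0,\dots,x_N\in\mathbb{R}^n$, $u_0,\dots,u_{N-1}\in\mathbb{R}^m$ of $x_{t+1}=Ax_t+Bu_t+w_t$ and $\lambda>0$, with $z_t=[x_t^\top,u_t^\top]^\top$, $\tilde\Phi_N=\arg\min_{Y\in\mathbb{R}^{n\times(n+m)}}\{\lambda\|Y\|_F^2+\sum_{t=0}^{N-1}\|x_{t+1}-Yz_t\|^2\}$.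 $\hat A,\hat B$ are obtained from $\tilde A,\tilde B$ by setting the blocks $\hat A_{ij}$, $\hat B_{ij}$ to zero exactly for those $(i,j)$ with $D_{ij}=\infty$ (other blocks unchanged). $\|\cdot\|$ is the spectral norm. *)

theory Defs
  imports "HOL-Analysis.Analysis" "HOL-Library.Extended_Nat"
begin

text \<open>Graph G(V,Arcs) on V = {1..p}; an arc (j,i) in Arcs means an edge from j to i,
  carrying delay dl j i (0 or 1).\<close>

definition is_dpath :: "(nat \<times> nat) set \<Rightarrow> nat \<Rightarrow> nat \<Rightarrow> nat list \<Rightarrow> bool" where
  "is_dpath Arcs j i xs \<longleftrightarrow> xs \<noteq> [] \<and> hd xs = j \<and> last xs = i \<and> distinct xs
     \<and> (\<forall>k. Suc k < length xs \<longrightarrow> (xs ! k, xs ! Suc k) \<in> Arcs)"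

definition path_delay :: "(nat \<Rightarrow> nat \<Rightarrow> nat) \<Rightarrow> nat list \<Rightarrow> nat" where
  "path_delay dl xs = (\<Sum>k<length xs - 1. dl (xs ! k) (xs ! Suc k))"

definition min_delay :: "(nat \<times> nat) set \<Rightarrow> (nat \<Rightarrow> nat \<Rightarrow> nat) \<Rightarrow> nat \<Rightarrow> nat \<Rightarrow> enat" where
  "min_delay Arcs dl i j = Inf {enat (path_delay dl xs) | xs. is_dpath Arcs j i xs}"

definition num_scc :: "nat set \<Rightarrow> (nat \<times> nat) set \<Rightarrow> nat" where
  "num_scc V Arcs = card (V // {(a, b). a \<in> V \<and> b \<in> V \<and> (a, b) \<in> Arcs\<^sup>* \<and> (b, a) \<in> Arcs\<^sup>*})"

definition stack_vec :: "real^'n \<Rightarrow> real^'m \<Rightarrow> real^('n + 'm)" where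
  "stack_vec x u = (\<chi> k. case k of Inl c \<Rightarrow> x $ c | Inr c \<Rightarrow> u $ c)"

definition hcat :: "real^'n^'r \<Rightarrow> real^'m^'r \<Rightarrow> real^('n + 'm)^'r" where
  "hcat A B = (\<chi> r. \<chi> k. case k of Inl c \<Rightarrow> A $ r $ c | Inr c \<Rightarrow> B $ r $ c)"

definition frob_sq :: "real^'c^'r \<Rightarrow> real" where
  "frob_sq Y = (\<Sum>r\<in>UNIV. \<Sum>c\<in>UNIV. (Y $ r $ c)^2)"

definition spec_norm :: "real^'c^'r \<Rightarrow> real" where
  "spec_norm M = onorm (\<lambda>v. M *v v)"

definition rls_obj :: "real \<Rightarrow> nat \<Rightarrow> (nat \<Rightarrow> real^'n) \<Rightarrow> (nat \<Rightarrow> real^'m)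
   \<Rightarrow> real^('n + 'm)^'n \<Rightarrow> real" where
  "rls_obj lam N x u Y = lam * frob_sq Y + (\<Sum>t<N. (norm (x (Suc t) - Y *v stack_vec (x t) (u t)))^2)"

text \<open>Sparsification: zero the block (i,j) iff D_{ij} = infinity. State coordinate r lies
  in block bx r, input coordinate c lies in block bu c.\<close>
definition sparsify :: "(nat \<Rightarrow> nat \<Rightarrow> enat) \<Rightarrow> ('n::finite \<Rightarrow> nat) \<Rightarrow> ('m::finite \<Rightarrow> nat)
   \<Rightarrow> real^('n + 'm)^'n \<Rightarrow> real^('n + 'm)^'n" where
  "sparsify D bx bu M = (\<chi> r. \<chi> k.
     (let j = (case k of Inl c \<Rightarrow> bx c | Inr c \<Rightarrow> bu c)
      in if D (bx r) j = \<infinity> then 0 else M $ r $ k))"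

end

theory Submission
  imports Defs
begin

text \<open>Let \<open>E = [A B] - Phit\<close> and let \<open>M\<close> be the error of the sparsified estimate. Every
  nonzero block \<open>(i, j)\<close> of \<open>[A B]\<close> has \<open>D\<^sub>i\<^sub>j \<le> 1\<close>, so \<open>[A B]\<close> vanishes wherever the
  sparsification zeroes \<open>Phit\<close>: the entry \<open>(r, k)\<close> of \<open>M\<close> is that of \<open>E\<close> if the block of
  column \<open>k\<close> reaches the block of row \<open>r\<close> in the graph, and \<open>0\<close> otherwise. Which blocks
  reach block \<open>i\<close> depends only on the strongly connected component of \<open>i\<close>, so the rows of
  \<open>M v\<close> belonging to a component \<open>C\<close> are rows of \<open>E v\<^sub>C\<close>, where \<open>v\<^sub>C\<close> is \<open>v\<close> with some
  coordinates set to zero. Hence \<open>\<parallel>M v\<parallel>\<^sup>2 \<le> \<Sum>\<^sub>C \<parallel>E v\<^sub>C\<parallel>\<^sup>2 \<le> \<psi> \<epsilon>\<^sup>2 \<parallel>v\<parallel>\<^sup>2\<close>.\<close>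

lemma is_dpath_imp_rtrancl:
  assumes "is_dpath Arcs j i xs"
  shows "(j, i) \<in> Arcs\<^sup>*"
proof -
  have prefix: "(j, xs ! k) \<in> Arcs\<^sup>*" if "k < length xs" for k
    using that
  proof (induction k)
    case 0
    then show ?case using assms by (simp add: is_dpath_def hd_conv_nth)
  next
    case (Suc k)
    then have "(xs ! k, xs ! Suc k) \<in> Arcs" using assms by (simp add: is_dpath_def)
    with Suc show ?case by (meson Suc_lessD rtrancl.rtrancl_into_rtrancl)
  qed
  have "xs \<noteq> []" "last xs = i" using assms by (auto simp: is_dpath_def)
  then show ?thesis using prefix[of "length xs - 1"] by (simp add: last_conv_nth)
qed

lemma is_dpath_snoc:
  assumes "is_dpath Arcs j y xs" and "(y, z) \<in> Arcs" and "z \<notin> set xs"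
  shows "is_dpath Arcs j z (xs @ [z])"
  unfolding is_dpath_def
proof (intro conjI allI impI)
  fix k assume k: "Suc k < length (xs @ [z])"
  show "((xs @ [z]) ! k, (xs @ [z]) ! Suc k) \<in> Arcs"
  proof (cases "Suc k < length xs")
    case True
    then show ?thesis using assms(1) by (simp add: is_dpath_def nth_append)
  next
    case False
    then have "k = length xs - 1" "Suc k = length xs" using k by auto
    moreover have "xs ! (length xs - 1) = y" "xs \<noteq> []"
      using assms(1) by (auto simp: is_dpath_def last_conv_nth)
    ultimately show ?thesis using assms(2) by (simp add: nth_append)
  qed
qed (use assms in \<open>auto simp: is_dpath_def\<close>)

lemma is_dpath_take:
  assumes "is_dpath Arcs j y xs" and "n < length xs"
  shows "is_dpath Arcs j (xs ! n) (take (Suc n) xs)"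
  using assms unfolding is_dpath_def
  by (auto simp: last_conv_nth min_def intro!: arg_cong[where f = "(!) xs"])

lemma rtrancl_imp_ex_dpath:
  assumes "(j, i) \<in> Arcs\<^sup>*"
  shows "\<exists>xs. is_dpath Arcs j i xs"
  using assms
proof (induction rule: rtrancl_induct)
  case base
  have "is_dpath Arcs j j [j]" by (simp add: is_dpath_def)
  then show ?case ..
next
  case (step y z)
  then obtain xs where xs: "is_dpath Arcs j y xs" by blast
  show ?case
  proof (cases "z \<in> set xs")
    case True
    then obtain n where "n < length xs" "xs ! n = z" by (meson in_set_conv_nth)
    then show ?thesis using is_dpath_take[OF xs] by metis
  next
    case False
    then show ?thesis using is_dpath_snoc[OF xs step(2)] by blast
  qed
qed

lemma min_delay_eq_infinity_iff:
  "min_delay Arcs dl i j = \<infinity> \<longleftrightarrow> (j, i) \<notin> Arcs\<^sup>*"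
proof
  assume "(j, i) \<notin> Arcs\<^sup>*"
  then have "{enat (path_delay dl xs) | xs. is_dpath Arcs j i xs} = {}"
    using is_dpath_imp_rtrancl by blast
  then show "min_delay Arcs dl i j = \<infinity>" by (simp add: min_delay_def top_enat_def)
next
  assume "min_delay Arcs dl i j = \<infinity>"
  moreover have "min_delay Arcs dl i j \<le> enat (path_delay dl xs)" if "is_dpath Arcs j i xs" for xs
    unfolding min_delay_def using that by (intro Inf_lower) blast
  ultimately show "(j, i) \<notin> Arcs\<^sup>*" using rtrancl_imp_ex_dpath by fastforce
qed

definition scc_rel :: "nat set \<Rightarrow> (nat \<times> nat) set \<Rightarrow> (nat \<times> nat) set" where
  "scc_rel V Arcs = {(a, b). a \<in> V \<and> b \<in> V \<and> (a, b) \<in> Arcs\<^sup>* \<and> (b, a) \<in> Arcs\<^sup>*}"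

lemma num_scc_eq_card_quotient: "num_scc V Arcs = card (V // scc_rel V Arcs)"
  by (simp add: num_scc_def scc_rel_def)

lemma rtrancl_into_scc_iff:
  assumes "v \<in> V"
  shows "(c, v) \<in> Arcs\<^sup>* \<longleftrightarrow> (\<exists>i \<in> scc_rel V Arcs `` {v}. (c, i) \<in> Arcs\<^sup>*)"
  using assms by (auto simp: scc_rel_def intro: rtrancl_trans)

lemma card_scc_image_le_num_scc:
  assumes "finite V" and "range f \<subseteq> V"
  shows "card (range (\<lambda>r. scc_rel V Arcs `` {f r})) \<le> num_scc V Arcs"
  unfolding num_scc_eq_card_quotient
proof (rule card_mono)
  show "finite (V // scc_rel V Arcs)"
    using assms(1) by (rule finite_quotient) (auto simp: scc_rel_def)
  show "range (\<lambda>r. scc_rel V Arcs `` {f r}) \<subseteq> V // scc_rel V Arcs"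
    using assms(2) by (auto intro: quotientI)
qed

lemma power2_norm_vec: "(norm (x :: real^'k))\<^sup>2 = (\<Sum>i\<in>UNIV. (x $ i)\<^sup>2)"
  by (simp add: norm_vec_def L2_set_def sum_nonneg)

lemma norm_mult_le_spec_norm: "norm (M *v v) \<le> spec_norm M * norm v"
  unfolding spec_norm_def by (rule onorm) simp

lemma spec_norm_nonneg: "0 \<le> spec_norm M"
  unfolding spec_norm_def by (rule onorm_pos_le) simp

lemma spec_norm_le: "(\<And>v. norm (M *v v) \<le> c * norm v) \<Longrightarrow> spec_norm M \<le> c"
  unfolding spec_norm_def by (rule onorm_le)

definition mask_vec :: "'c set \<Rightarrow> real^'c \<Rightarrow> real^'c" where
  "mask_vec S v = (\<chi> k. if k \<in> S then v $ k else 0)"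

lemma norm_mask_vec_le: "norm (mask_vec S v) \<le> norm v"
  by (rule norm_le_componentwise_cart) (simp add: mask_vec_def)

lemma spec_norm_row_masked_le:
  fixes M E :: "real^'c^'r" and cls :: "'r \<Rightarrow> 'q" and S :: "'q \<Rightarrow> 'c set"
  assumes M: "\<And>r k. M $ r $ k = (if k \<in> S (cls r) then E $ r $ k else 0)"
  shows "spec_norm M \<le> sqrt (card (range cls)) * spec_norm E"
proof (rule spec_norm_le)
  fix v :: "real^'c"
  let ?Q = "range cls"
  let ?Ev = "\<lambda>C. E *v mask_vec (S C) v"
  have row: "(M *v v) $ r = ?Ev (cls r) $ r" for r
    by (auto simp: matrix_vector_mult_def M mask_vec_def intro: sum.cong)
  have "(norm (M *v v))\<^sup>2 = (\<Sum>r\<in>UNIV. (?Ev (cls r) $ r)\<^sup>2)"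
    by (simp add: power2_norm_vec row)
  also have "\<dots> = (\<Sum>C\<in>?Q. \<Sum>r\<in>{r. cls r = C}. (?Ev C $ r)\<^sup>2)"
    by (subst sum.group[symmetric, of UNIV ?Q cls]) auto
  also have "\<dots> \<le> (\<Sum>C\<in>?Q. (norm (?Ev C))\<^sup>2)"
    unfolding power2_norm_vec by (intro sum_mono sum_mono2) auto
  also have "\<dots> \<le> (\<Sum>C\<in>?Q. (spec_norm E * norm v)\<^sup>2)"
    using order_trans[OF norm_mult_le_spec_norm mult_left_mono[OF norm_mask_vec_le spec_norm_nonneg]]
    by (intro sum_mono power_mono) auto
  also have "\<dots> = (sqrt (card ?Q) * spec_norm E * norm v)\<^sup>2"
    by (simp add: power_mult_distrib)
  finally show "norm (M *v v) \<le> sqrt (card ?Q) * spec_norm E * norm v"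
    by (rule power2_le_imp_le) (simp add: spec_norm_nonneg)
qed

lemma sparsify_error_nth:
  assumes A_sparse: "\<forall>r c. bx c \<notin> Nb (bx r) \<longrightarrow> A $ r $ c = 0"
    and B_sparse: "\<forall>r c. bu c \<notin> Nb (bx r) \<longrightarrow> B $ r $ c = 0"
    and Nb_supp: "\<And>r j. j \<in> Nb (bx r) \<Longrightarrow> D (bx r) j \<noteq> \<infinity>"
  shows "(hcat A B - sparsify D bx bu Phit) $ r $ k =
           (if D (bx r) (case_sum bx bu k) = \<infinity> then 0 else (hcat A B - Phit) $ r $ k)"
proof (cases "D (bx r) (case_sum bx bu k) = \<infinity>")
  case True
  then have "case_sum bx bu k \<notin> Nb (bx r)" using Nb_supp by blast
  then have "hcat A B $ r $ k = 0"
    using A_sparse B_sparse by (cases k) (simp_all add: hcat_def)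
  then show ?thesis using True by (simp add: sparsify_def)
next
  case False
  show ?thesis by (simp add: sparsify_def False)
qed

theorem lemma5:
  fixes p :: nat
    and bx :: "'n::finite \<Rightarrow> nat" and bu :: "'m::finite \<Rightarrow> nat"
    and A :: "real^'n^'n" and B :: "real^'m^'n"
    and Nb :: "nat \<Rightarrow> nat set"
    and Arcs :: "(nat \<times> nat) set" and dl :: "nat \<Rightarrow> nat \<Rightarrow> nat"
    and N :: nat and x :: "nat \<Rightarrow> real^'n" and u :: "nat \<Rightarrow> real^'m"
    and w :: "nat \<Rightarrow> real^'n"
    and lam :: real and Phit :: "real^('n + 'm)^'n" and eps :: real
  assumes bx_range: "bx ` UNIV = {1..p}"
    and bu_range: "bu ` UNIV \<subseteq> {1..p}"
    and Nb_sub: "\<forall>i\<in>{1..p}. Nb i \<subseteq> {1..p}"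
    and A_sparse: "\<forall>r c. bx c \<notin> Nb (bx r) \<longrightarrow> A $ r $ c = 0"
    and B_sparse: "\<forall>r c. bu c \<notin> Nb (bx r) \<longrightarrow> B $ r $ c = 0"
    and arcs_V: "Arcs \<subseteq> {1..p} \<times> {1..p}"
    and no_loops: "\<forall>v. (v, v) \<notin> Arcs"
    and delays: "\<forall>(j, i)\<in>Arcs. dl j i \<in> {0, 1}"
    and nbr_delay: "\<forall>i\<in>{1..p}. \<forall>j\<in>Nb i. min_delay Arcs dl i j \<le> 1"
    and traj: "\<forall>t<N. x (Suc t) = A *v x t + B *v u t + w t"
    and lam_pos: "lam > 0"
    and rls: "\<forall>Y. rls_obj lam N x u Phit \<le> rls_obj lam N x u Y"
    and eps_pos: "eps > 0"
    and err: "spec_norm (hcat A B - Phit) \<le> eps"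
  shows "spec_norm (hcat A B - sparsify (min_delay Arcs dl) bx bu Phit)
           \<le> sqrt (real (num_scc {1..p} Arcs)) * eps"
proof -
  define cls where "cls r = scc_rel {1..p} Arcs `` {bx r}" for r
  define S where "S C = {k. \<exists>i\<in>C. (case_sum bx bu k, i) \<in> Arcs\<^sup>*}" for C
  have bx_in: "bx r \<in> {1..p}" for r using bx_range by blast
  have Nb_supp: "min_delay Arcs dl (bx r) j \<noteq> \<infinity>" if "j \<in> Nb (bx r)" for r j
  proof
    have "min_delay Arcs dl (bx r) j \<le> 1" using nbr_delay bx_in that by blast
    then show "min_delay Arcs dl (bx r) j = \<infinity> \<Longrightarrow> False" by simp
  qed
  have "(hcat A B - sparsify (min_delay Arcs dl) bx bu Phit) $ r $ k =
      (if k \<in> S (cls r) then (hcat A B - Phit) $ r $ k else 0)" for r k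
  proof -
    have "min_delay Arcs dl (bx r) (case_sum bx bu k) = \<infinity> \<longleftrightarrow> k \<notin> S (cls r)"
      using rtrancl_into_scc_iff[OF bx_in] by (simp add: min_delay_eq_infinity_iff S_def cls_def)
    then show ?thesis
      using sparsify_error_nth[where D = "min_delay Arcs dl", OF A_sparse B_sparse Nb_supp] by simp
  qed
  then have "spec_norm (hcat A B - sparsify (min_delay Arcs dl) bx bu Phit)
      \<le> sqrt (card (range cls)) * spec_norm (hcat A B - Phit)"
    by (rule spec_norm_row_masked_le)
  also have "\<dots> \<le> sqrt (num_scc {1..p} Arcs) * eps"
    using card_scc_image_le_num_scc[of "{1..p}" bx Arcs] bx_range err
    by (intro mult_mono) (auto simp: cls_def spec_norm_nonneg)
  finally show ?thesis .
qed

end
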